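(* In the discrete first-price auction with $n=2$ bidders, in the model without ties, and with values drawn independently and uniformly from $X=\{0,1,\dots,x\}$, the symmetric equilibria are exactly $\beta(v)=\lfloor v/2\rfloor$ and $\beta(v)=\lceil v/2\rceil$.
   Context: Model. There are $n$ risk-neutral bidders competing for one indivisible object. Values and bids lie in $X=\{0,1,2,\dots,x\}$ for some $x\in\mathbb N$. Each bidder privately learns a value drawn independently and uniformly from $X$ (each value has probability $1/(x+1)$). Each bidder submits a bid in $X$. A (pure) strategy is a bidding function $\beta:X\to X$. In the model without ties, bidder $i$ wins iff $b_i>b_j$ for all $j\neq i$ (if the highest bid is tied, nobody wins). In the first-price auction, a bidder with value $v_i$ bidding $b_i$ gets expected payoff $(v_i-b_i)\Pr(i\text{ wins})$. An equilibrium is a profile of bidding functions such that each bidder's bidding function maximises their expected payoff given the others' bidding functions (a pure-strategy Bayes–Nash equilibrium) and such that no bidder uses a weakly dominated bidding function (a bidding function is weakly dominated if some other bidding function yields at least as high expected payoff against every profile of opponents' bidding functions, and strictly higher against some). A symmetric equilibrium (SE) is an equilibrium in which all bidders use the same bidding function. *)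

theory Defs
  imports Complex_Main
begin

text \<open>A (pure) bidding function is a map X -> X,
  represented by a function nat => nat mapping {0..x} into {0..x} (values outside X are irrelevant).\<close>

definition strategy :: "nat \<Rightarrow> (nat \<Rightarrow> nat) \<Rightarrow> bool" where
  "strategy x \<beta> \<longleftrightarrow> (\<forall>v\<le>x. \<beta> v \<le> x)"

text \<open>Probability of winning with bid b when the opponent uses \<gamma>: the opponent's bid must be
  strictly lower (tied highest bids: nobody wins).\<close>
definition win_prob :: "nat \<Rightarrow> nat \<Rightarrow> (nat \<Rightarrow> nat) \<Rightarrow> real" where
  "win_prob x b \<gamma> = real (card {w. w \<le> x \<and> \<gamma> w < b}) / real (x + 1)"

definition payoff :: "nat \<Rightarrow> (nat \<Rightarrow> nat) \<Rightarrow> (nat \<Rightarrow> nat) \<Rightarrow> real" where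
  "payoff x \<beta> \<gamma> = (\<Sum>v\<le>x. (1 / real (x + 1)) * ((real v - real (\<beta> v)) * win_prob x (\<beta> v) \<gamma>))"

definition weakly_dominated :: "nat \<Rightarrow> (nat \<Rightarrow> nat) \<Rightarrow> bool" where
  "weakly_dominated x \<beta> \<longleftrightarrow>
     (\<exists>\<beta>'. strategy x \<beta>' \<and>
        (\<forall>\<gamma>. strategy x \<gamma> \<longrightarrow> payoff x \<beta>' \<gamma> \<ge> payoff x \<beta> \<gamma>) \<and>
        (\<exists>\<gamma>. strategy x \<gamma> \<and> payoff x \<beta>' \<gamma> > payoff x \<beta> \<gamma>))"

definition symmetric_equilibrium :: "nat \<Rightarrow> (nat \<Rightarrow> nat) \<Rightarrow> bool" where
  "symmetric_equilibrium x \<beta> \<longleftrightarrow>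
     strategy x \<beta> \<and>
     (\<forall>\<beta>'. strategy x \<beta>' \<longrightarrow> payoff x \<beta>' \<beta> \<le> payoff x \<beta> \<beta>) \<and>
     \<not> weakly_dominated x \<beta>"

end

theory Submission
  imports Defs
begin

text \<open>Up to a constant factor, the payoff of a bidder with value v bidding b against g is
  (v - b) G(b), where G(b) counts the opponent values whose bid is below b.

  Non-dominance rules out overbidding, so f 0 = 0 and f 1 is 0 or 1, and adding the
  best-response inequalities of two values shows that f is monotone. By strong induction
  f v = (v + f 1) div 2: once f is known below v, a higher bid at v sacrifices more margin than it
  gains in winning chances, and a lower bid would make f constant on three consecutive values,
  whose common bid could then profitably be raised by one.

  Against an opponent with G(b) = min (2b + a) (x + 1), where |a| \<le> 1, the payoff is
  the concave parabola (v - b)(2b + a), maximised at the integers nearest to (2v - a)/4. Both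
  halving rules are best responses to themselves in this way, and each is the unique best
  response to a suitable opponent, up to the payoff-irrelevant choice between bids 0 and 1 at
  value 1; this rules out weak dominance.\<close>

definition win_count :: "nat \<Rightarrow> (nat \<Rightarrow> nat) \<Rightarrow> nat \<Rightarrow> nat" where
  "win_count x g b = card {w. w \<le> x \<and> g w < b}"

definition gain :: "nat \<Rightarrow> (nat \<Rightarrow> nat) \<Rightarrow> nat \<Rightarrow> nat \<Rightarrow> int" where
  "gain x g v b = (int v - int b) * int (win_count x g b)"

definition total_gain :: "nat \<Rightarrow> (nat \<Rightarrow> nat) \<Rightarrow> (nat \<Rightarrow> nat) \<Rightarrow> int" where
  "total_gain x f g = (\<Sum>v\<le>x. gain x g v (f v))"

lemma payoff_eq_total_gain: "payoff x f g = of_int (total_gain x f g) / (real (x + 1))\<^sup>2"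
  unfolding payoff_def total_gain_def gain_def win_prob_def win_count_def
  by (simp add: sum_divide_distrib power2_eq_square field_simps)

lemma payoff_le_iff: "payoff x f g \<le> payoff x f' g \<longleftrightarrow> total_gain x f g \<le> total_gain x f' g"
  unfolding payoff_eq_total_gain by (simp add: divide_le_cancel)

lemma payoff_less_iff: "payoff x f g < payoff x f' g \<longleftrightarrow> total_gain x f g < total_gain x f' g"
  unfolding payoff_eq_total_gain by (simp add: divide_less_cancel)

lemma total_gain_fun_upd:
  assumes "v \<le> x"
  shows "total_gain x (f(v := b)) g = total_gain x f g - gain x g v (f v) + gain x g v b"
proof -
  have "total_gain x (f(v := b)) g - gain x g v b = total_gain x f g - gain x g v (f v)"
    unfolding total_gain_def using assms
    by (simp add: sum.remove[of "{..x}" v])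
  then show ?thesis by simp
qed

lemma win_count_ge:
  assumes "m \<le> x + 1" and "\<And>w. w < m \<Longrightarrow> g w < b"
  shows "m \<le> win_count x g b"
proof -
  have "card {..<m} \<le> win_count x g b"
    unfolding win_count_def by (rule card_mono) (use assms in auto)
  then show ?thesis by simp
qed

lemma win_count_le:
  assumes "\<And>w. m \<le> w \<Longrightarrow> w \<le> x \<Longrightarrow> b \<le> g w"
  shows "win_count x g b \<le> m"
proof -
  have "win_count x g b \<le> card {..<m}"
    unfolding win_count_def by (rule card_mono) (use assms not_le in auto)
  then show ?thesis by simp
qed

lemma win_count_eq:
  assumes "\<And>w. w \<le> x \<Longrightarrow> g w < b \<longleftrightarrow> w < m"
  shows "win_count x g b = min m (x + 1)"
proof -
  have "{w. w \<le> x \<and> g w < b} = {..<min m (x + 1)}" using assms by auto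
  then show ?thesis unfolding win_count_def by simp
qed

lemma win_count_mono: "b \<le> b' \<Longrightarrow> win_count x g b \<le> win_count x g b'"
  unfolding win_count_def by (rule card_mono) auto

lemma gain_zero_bid [simp]: "gain x g v 0 = 0"
  unfolding gain_def win_count_def by simp

lemma gain_nonpos: "v \<le> b \<Longrightarrow> gain x g v b \<le> 0"
  unfolding gain_def by (simp add: mult_nonpos_nonneg)

lemma gain_neg: "v < b \<Longrightarrow> 0 < win_count x g b \<Longrightarrow> gain x g v b < 0"
  unfolding gain_def by (simp add: mult_neg_pos)

lemma gain_nonneg: "b \<le> v \<Longrightarrow> 0 \<le> gain x g v b"
  unfolding gain_def by simp

lemma strategy_fun_upd: "strategy x f \<Longrightarrow> b \<le> x \<Longrightarrow> strategy x (f(v := b))"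
  unfolding strategy_def by auto

lemma symmetric_equilibrium_best_bid:
  assumes se: "symmetric_equilibrium x f" and "v \<le> x" and "b \<le> x"
  shows "gain x f v b \<le> gain x f v (f v)"
proof -
  have "strategy x (f(v := b))"
    using se assms strategy_fun_upd unfolding symmetric_equilibrium_def by blast
  then have "total_gain x (f(v := b)) f \<le> total_gain x f f"
    using se unfolding symmetric_equilibrium_def payoff_le_iff by blast
  then show ?thesis using total_gain_fun_upd[OF \<open>v \<le> x\<close>] by simp
qed

text \<open>Overbidding is weakly dominated by bidding 0, strictly so against an opponent who always
  bids 0.\<close>

lemma symmetric_equilibrium_no_overbid:
  assumes se: "symmetric_equilibrium x f" and v: "v \<le> x"
  shows "f v \<le> v"
proof (rule ccontr)
  assume over: "\<not> f v \<le> v"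
  have "strategy x (f(v := 0))" "strategy x (\<lambda>_. 0)"
    using se strategy_fun_upd unfolding symmetric_equilibrium_def strategy_def by auto
  moreover have "payoff x f g \<le> payoff x (f(v := 0)) g" for g
    unfolding payoff_le_iff total_gain_fun_upd[OF v] using gain_nonpos[of v "f v"] over by simp
  moreover have "payoff x f (\<lambda>_. 0) < payoff x (f(v := 0)) (\<lambda>_. 0)"
  proof -
    have "0 < win_count x (\<lambda>_. 0) (f v)" unfolding win_count_def using over by simp
    then show ?thesis
      unfolding payoff_less_iff total_gain_fun_upd[OF v] using gain_neg[of v "f v"] over by simp
  qed
  ultimately have "weakly_dominated x f" unfolding weakly_dominated_def by blast
  then show False using se unfolding symmetric_equilibrium_def by blast
qed

lemma symmetric_equilibrium_bid_le: "symmetric_equilibrium x f \<Longrightarrow> v \<le> x \<Longrightarrow> f v \<le> x"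
  unfolding symmetric_equilibrium_def strategy_def by blast

lemma symmetric_equilibrium_win_count_pos:
  assumes "symmetric_equilibrium x f" and "1 \<le> b"
  shows "0 < win_count x f b"
  using win_count_ge[of 1 x f b] symmetric_equilibrium_no_overbid[OF assms(1), of 0] assms(2) by simp

lemma symmetric_equilibrium_mono:
  assumes se: "symmetric_equilibrium x f" and "w \<le> v" and v: "v \<le> x"
  shows "f w \<le> f v"
proof (rule ccontr)
  assume "\<not> f w \<le> f v"
  then have lt: "f v < f w" by simp
  have w: "w \<le> x" using assms by simp
  define G G' where "G = win_count x f (f w)" and "G' = win_count x f (f v)"
  have swap_w: "(int w - int (f v)) * G' \<le> (int w - int (f w)) * G"
    using symmetric_equilibrium_best_bid[OF se w symmetric_equilibrium_bid_le[OF se v]]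
    unfolding gain_def G_def G'_def .
  have swap_v: "(int v - int (f w)) * G \<le> (int v - int (f v)) * G'"
    using symmetric_equilibrium_best_bid[OF se v symmetric_equilibrium_bid_le[OF se w]]
    unfolding gain_def G_def G'_def .
  have "(int v - int w) * (int G - int G') \<le> 0"
    using swap_w swap_v by (simp add: algebra_simps)
  moreover have "w < v" using lt \<open>w \<le> v\<close> by (cases "w = v") auto
  moreover have "G' \<le> G" unfolding G_def G'_def using lt by (simp add: win_count_mono)
  ultimately have "G = G'" by (simp add: mult_le_0_iff)
  moreover have "0 < G" unfolding G_def using symmetric_equilibrium_win_count_pos[OF se] lt by simp
  ultimately show False using swap_w lt by simp
qed

lemma symmetric_equilibrium_win_count_le:
  assumes se: "symmetric_equilibrium x f" and "v \<le> x" and "b \<le> f v"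
  shows "win_count x f b \<le> v"
  using symmetric_equilibrium_mono[OF se] assms(2,3) by (intro win_count_le) (meson le_trans)

lemma symmetric_equilibrium_win_count_ge:
  assumes se: "symmetric_equilibrium x f" and "v \<le> x" and "f v < b"
  shows "v + 1 \<le> win_count x f b"
proof (rule win_count_ge)
  fix w assume "w < v + 1"
  then show "f w < b" using symmetric_equilibrium_mono[OF se, of w v] assms(2,3) by simp
qed (use assms(2) in simp)

text \<open>Raising the common bid c of the values v, v + 1, v + 2 by one wins against at least three
  more values, which pays unless c is large.\<close>

lemma symmetric_equilibrium_bid_increases:
  assumes se: "symmetric_equilibrium x f" and v: "v + 2 \<le> x" and flat: "f v = f (v + 2)"
  shows "2 * v + 3 \<le> 3 * f v"
proof -
  define c where "c = f v"
  have "c \<le> v" unfolding c_def using symmetric_equilibrium_no_overbid[OF se] v by simp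
  have "gain x f (v + 2) (c + 1) \<le> gain x f (v + 2) c"
    using symmetric_equilibrium_best_bid[OF se, of "v + 2" "c + 1"] v flat \<open>c \<le> v\<close>
    unfolding c_def by simp
  moreover have "v + 3 \<le> win_count x f (c + 1)"
    using symmetric_equilibrium_win_count_ge[OF se, of "v + 2" "c + 1"] v flat unfolding c_def by simp
  then have "(int v + 1 - int c) * (int v + 3) \<le> (int v + 1 - int c) * win_count x f (c + 1)"
    using \<open>c \<le> v\<close> by (intro mult_left_mono) auto
  then have "(int v + 1 - int c) * (int v + 3) \<le> gain x f (v + 2) (c + 1)"
    by (simp add: gain_def algebra_simps)
  moreover have "win_count x f c \<le> v"
    using symmetric_equilibrium_win_count_le[OF se, of v c] v unfolding c_def by simp
  then have "gain x f (v + 2) c \<le> (int (v + 2) - int c) * int v"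
    unfolding gain_def using \<open>c \<le> v\<close> by (intro mult_left_mono) auto
  ultimately have "(int v + 1 - int c) * (int v + 3) \<le> (int (v + 2) - int c) * int v"
    by linarith
  then show ?thesis unfolding c_def[symmetric] by (simp add: algebra_simps)
qed

lemma symmetric_equilibrium_bid_bounded:
  assumes se: "symmetric_equilibrium x f" and v: "v \<le> x" and "k < v" and "k < f v"
  shows "(int v - int k) * int (win_count x f k) \<le> (int v - int k - 1) * int v"
proof -
  define c where "c = f v"
  have "k < c" "c \<le> v"
    using assms symmetric_equilibrium_no_overbid[OF se v] unfolding c_def by auto
  have "(int v - int k) * int (win_count x f k) = gain x f v k" unfolding gain_def ..
  also have "\<dots> \<le> gain x f v c"
    using symmetric_equilibrium_best_bid[OF se v, of k] v \<open>k < v\<close> unfolding c_def by simp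
  also have "\<dots> \<le> (int v - int k - 1) * int v"
    unfolding gain_def
    using symmetric_equilibrium_win_count_le[OF se v, of c] \<open>k < c\<close> \<open>c \<le> v\<close>
    by (intro mult_mono) (auto simp: c_def)
  finally show ?thesis .
qed

lemma half_bid_beats_higher_bid:
  fixes v k e :: int
  assumes "1 \<le> k" "0 \<le> e" "e \<le> 1" "2 * k \<le> v + e" "v + e \<le> 2 * k + 1"
  shows "(v - k - 1) * v < (v - k) * (2 * k - e)"
proof -
  define r where "r = v + e - 2 * k"
  then have v: "v = 2 * k - e + r" by simp
  have "(v - k) * (2 * k - e) - (v - k - 1) * v = 2 * k - e + r - r * (k - e + r)"
    unfolding v by (simp add: algebra_simps)
  moreover have "r = 0 \<or> r = 1" using assms unfolding r_def by auto
  ultimately show ?thesis using assms by auto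
qed

lemma symmetric_equilibrium_halving_lower:
  assumes se: "symmetric_equilibrium x f" and "e \<le> 1" and "2 \<le> v" and "v \<le> x"
    and below: "\<And>w. w < v \<Longrightarrow> f w = (w + e) div 2"
  shows "(v + e) div 2 \<le> f v"
proof (rule ccontr)
  define k where "k = (v + e) div 2"
  assume "\<not> (v + e) div 2 \<le> f v"
  then have low: "f v < k" unfolding k_def by simp
  have "f (v - 1) \<le> f v" using symmetric_equilibrium_mono[OF se _ \<open>v \<le> x\<close>] by simp
  then have even: "v + e = 2 * k" and "f v = k - 1"
    using below[of "v - 1"] low \<open>2 \<le> v\<close> unfolding k_def by auto
  moreover have "v - 2 + e = 2 * (k - 1)" using even \<open>2 \<le> v\<close> by simp
  then have "f (v - 2) = k - 1" using below[of "v - 2"] \<open>2 \<le> v\<close> by simp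
  moreover have "v - 2 + 2 = v" using \<open>2 \<le> v\<close> by simp
  ultimately have "2 * (v - 2) + 3 \<le> 3 * (k - 1)"
    using symmetric_equilibrium_bid_increases[OF se, of "v - 2"] \<open>v \<le> x\<close> by metis
  then show False using even \<open>2 \<le> v\<close> \<open>e \<le> 1\<close> by linarith
qed

lemma symmetric_equilibrium_halving_upper:
  assumes se: "symmetric_equilibrium x f" and "e \<le> 1" and "2 \<le> v" and "v \<le> x"
    and below: "\<And>w. w < v \<Longrightarrow> f w = (w + e) div 2"
  shows "f v \<le> (v + e) div 2"
proof (rule ccontr)
  define k where "k = (v + e) div 2"
  assume "\<not> f v \<le> (v + e) div 2"
  then have high: "k < f v" unfolding k_def by simp
  have "1 \<le> k" "k < v" "v + e = 2 * k \<or> v + e = 2 * k + 1"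
    using \<open>2 \<le> v\<close> \<open>e \<le> 1\<close> unfolding k_def by auto
  then have w: "2 * k - e - 1 < v" "2 * k - e - 1 + 1 = 2 * k - e" using \<open>e \<le> 1\<close> by auto
  then have "f (2 * k - e - 1) < k" using below[of "2 * k - e - 1"] \<open>1 \<le> k\<close> \<open>e \<le> 1\<close> by auto
  then have "2 * k - e \<le> win_count x f k"
    using symmetric_equilibrium_win_count_ge[OF se, of "2 * k - e - 1" k] w \<open>v \<le> x\<close> by simp
  then have "(int v - int k) * (2 * int k - int e) \<le> (int v - int k) * int (win_count x f k)"
    using \<open>k < v\<close> \<open>1 \<le> k\<close> \<open>e \<le> 1\<close> by (intro mult_left_mono) auto
  also have "\<dots> \<le> (int v - int k - 1) * int v"
    using symmetric_equilibrium_bid_bounded[OF se \<open>v \<le> x\<close> \<open>k < v\<close> high] .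
  also have "\<dots> < (int v - int k) * (2 * int k - int e)"
    using \<open>v + e = 2 * k \<or> v + e = 2 * k + 1\<close> \<open>1 \<le> k\<close> \<open>e \<le> 1\<close>
    by (intro half_bid_beats_higher_bid) auto
  finally show False by simp
qed

lemma symmetric_equilibrium_halving:
  assumes se: "symmetric_equilibrium x f" and "f 1 \<le> 1"
  shows "v \<le> x \<Longrightarrow> f v = (v + f 1) div 2"
proof (induction v rule: less_induct)
  case (less v)
  show ?case
  proof (cases "v \<le> 1")
    case True
    then show ?thesis
      using symmetric_equilibrium_no_overbid[OF se less.prems] \<open>f 1 \<le> 1\<close> by (cases v) auto
  next
    case False
    then have "2 \<le> v" by simp
    have below: "\<And>w. w < v \<Longrightarrow> f w = (w + f 1) div 2" using less by simp
    show ?thesis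
    proof (rule antisym)
      show "f v \<le> (v + f 1) div 2"
        by (rule symmetric_equilibrium_halving_upper[OF se \<open>f 1 \<le> 1\<close> \<open>2 \<le> v\<close> less.prems below])
      show "(v + f 1) div 2 \<le> f v"
        by (rule symmetric_equilibrium_halving_lower[OF se \<open>f 1 \<le> 1\<close> \<open>2 \<le> v\<close> less.prems below])
    qed
  qed
qed

lemma parabola_le_vertex:
  fixes a v k b :: int
  assumes "\<bar>4 * k - 2 * v + a\<bar> \<le> 2"
  shows "(v - b) * (2 * b + a) \<le> (v - k) * (2 * k + a)"
proof -
  have "(v - k) * (2 * k + a) - (v - b) * (2 * b + a) = (k - b) * (2 * (k - b) - (4 * k - 2 * v + a))"
    by (simp add: algebra_simps)
  moreover have "0 \<le> t * (2 * t - s)" if "\<bar>s\<bar> \<le> 2" for t s :: int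
    using that by (cases "t = 0" "0 < t" rule: case_split[case_product case_split])
      (auto intro: mult_nonneg_nonneg mult_nonpos_nonpos)
  ultimately show ?thesis using assms by (metis diff_ge_0_iff_ge)
qed

lemma parabola_less_vertex:
  fixes a v k b :: int
  assumes "\<bar>4 * k - 2 * v + a\<bar> \<le> 1" and "b \<noteq> k"
  shows "(v - b) * (2 * b + a) < (v - k) * (2 * k + a)"
proof -
  have "(v - k) * (2 * k + a) - (v - b) * (2 * b + a) = (k - b) * (2 * (k - b) - (4 * k - 2 * v + a))"
    by (simp add: algebra_simps)
  moreover have "0 < t * (2 * t - s)" if "\<bar>s\<bar> \<le> 1" "t \<noteq> 0" for t s :: int
    using that by (cases "0 < t") (auto intro: mult_pos_pos mult_neg_neg)
  ultimately show ?thesis using assms by (metis diff_gt_0_iff_gt right_minus_eq)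
qed

context
  fixes x :: nat and g :: "nat \<Rightarrow> nat" and a :: int
  assumes count: "\<And>b. 1 \<le> b \<Longrightarrow> int (win_count x g b) = min (2 * int b + a) (int x + 1)"
    and slope: "\<bar>a\<bar> \<le> 1"
begin

lemma gain_eq_parabola:
  assumes "1 \<le> k" and "2 * int k + a \<le> int x + 1"
  shows "gain x g v k = (int v - int k) * (2 * int k + a)"
  unfolding gain_def using count[OF assms(1)] assms(2) by simp

lemma gain_le_parabola:
  assumes "1 \<le> b" and "b \<le> v"
  shows "gain x g v b \<le> (int v - int b) * (2 * int b + a)"
  unfolding gain_def using count[OF assms(1)] assms(2) by (intro mult_left_mono) auto

lemma win_count_pos: "1 \<le> b \<Longrightarrow> 0 < win_count x g b"
  using count slope by force

lemma gain_le_vertex: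
  assumes v: "v \<le> x" and vertex: "\<bar>4 * int k - 2 * int v + a\<bar> \<le> 2"
  shows "gain x g v b \<le> gain x g v k"
proof -
  have "k \<le> v" "2 * int k + a \<le> int v + 1" using vertex slope by auto
  have "0 \<le> gain x g v k" using \<open>k \<le> v\<close> by (rule gain_nonneg)
  consider "b = 0 \<or> v \<le> b" | "1 \<le> b" "b < v" by linarith
  then show ?thesis
  proof cases
    case 1
    then show ?thesis using gain_nonpos[of v b x g] \<open>0 \<le> gain x g v k\<close> by auto
  next
    case 2
    then have "1 \<le> k" using vertex slope by auto
    have "gain x g v b \<le> (int v - int b) * (2 * int b + a)" using 2 by (intro gain_le_parabola) auto
    also have "\<dots> \<le> (int v - int k) * (2 * int k + a)" using vertex by (rule parabola_le_vertex)
    also have "\<dots> = gain x g v k"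
      using gain_eq_parabola[OF \<open>1 \<le> k\<close>] \<open>2 * int k + a \<le> int v + 1\<close> v by simp
    finally show ?thesis .
  qed
qed

lemma gain_less_vertex:
  assumes v: "v \<le> x" and vertex: "\<bar>4 * int k - 2 * int v + a\<bar> \<le> 1"
    and "b \<noteq> k" and "\<not> (v = 1 \<and> b \<le> 1)"
  shows "gain x g v b < gain x g v k"
proof (cases "v \<le> 1")
  case True
  moreover have "k \<le> v" using vertex slope by auto
  ultimately have "v < b" using assms by auto
  then show ?thesis
    using gain_neg[OF \<open>v < b\<close> win_count_pos] gain_nonneg[OF \<open>k \<le> v\<close>, of x g] by fastforce
next
  case False
  then have "1 \<le> k" "k < v" "2 * int k + a \<le> int v + 1" using vertex slope by auto
  then have gain_k: "gain x g v k = (int v - int k) * (2 * int k + a)"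
    using gain_eq_parabola v by simp
  then have "0 < gain x g v k" using \<open>1 \<le> k\<close> \<open>k < v\<close> slope by simp
  consider "b = 0 \<or> v \<le> b" | "1 \<le> b" "b < v" by linarith
  then show ?thesis
  proof cases
    case 1
    then show ?thesis using gain_nonpos[of v b x g] \<open>0 < gain x g v k\<close> by auto
  next
    case 2
    have "gain x g v b \<le> (int v - int b) * (2 * int b + a)" using 2 by (intro gain_le_parabola) auto
    also have "\<dots> < (int v - int k) * (2 * int k + a)"
      using vertex \<open>b \<noteq> k\<close> by (intro parabola_less_vertex) auto
    finally show ?thesis unfolding gain_k .
  qed
qed

end

lemma win_count_halving:
  assumes "1 \<le> b" and "e \<le> 1"
  shows "int (win_count x (\<lambda>w. (w + e) div 2) b) = min (2 * int b - int e) (int x + 1)"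
proof -
  have "win_count x (\<lambda>w. (w + e) div 2) b = min (2 * b - e) (x + 1)"
    by (rule win_count_eq) (use assms in \<open>auto simp: div_less_iff_less_mult\<close>)
  then show ?thesis using assms by auto
qed

lemma win_count_shifted_halving:
  assumes "1 \<le> b"
  shows "int (win_count x (\<lambda>w. (w - 1) div 2) b) = min (2 * int b + 1) (int x + 1)"
proof -
  have "win_count x (\<lambda>w. (w - 1) div 2) b = min (2 * b + 1) (x + 1)"
    by (rule win_count_eq) (use assms in \<open>auto simp: div_less_iff_less_mult\<close>)
  then show ?thesis by auto
qed

lemma not_weakly_dominated:
  assumes "strategy x g\<^sub>0"
    and best: "\<And>v b. v \<le> x \<Longrightarrow> gain x g\<^sub>0 v b \<le> gain x g\<^sub>0 v (f v)"
    and ties: "\<And>v b g. v \<le> x \<Longrightarrow> gain x g\<^sub>0 v b = gain x g\<^sub>0 v (f v) \<Longrightarrow>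
                 gain x g v b = gain x g v (f v)"
  shows "\<not> weakly_dominated x f"
proof
  assume "weakly_dominated x f"
  then obtain f' where dominates: "\<And>g. strategy x g \<Longrightarrow> payoff x f g \<le> payoff x f' g"
    and strictly: "\<exists>g. strategy x g \<and> payoff x f g < payoff x f' g"
    unfolding weakly_dominated_def by blast
  have "total_gain x f g\<^sub>0 \<le> total_gain x f' g\<^sub>0"
    using dominates[OF \<open>strategy x g\<^sub>0\<close>] by (simp add: payoff_le_iff)
  moreover have "total_gain x f' g\<^sub>0 \<le> total_gain x f g\<^sub>0"
    unfolding total_gain_def using best by (intro sum_mono) auto
  ultimately have "total_gain x f' g\<^sub>0 = total_gain x f g\<^sub>0" by simp
  then have "gain x g\<^sub>0 v (f' v) = gain x g\<^sub>0 v (f v)" if "v \<le> x" for v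
    unfolding total_gain_def by (rule sum_mono_inv) (use best that in auto)
  then have "gain x g v (f' v) = gain x g v (f v)" if "v \<le> x" for v g
    using ties that by blast
  then have "total_gain x f' g = total_gain x f g" for g
    unfolding total_gain_def by (intro sum.cong) auto
  then show False using strictly by (simp add: payoff_less_iff)
qed

lemma gain_value_one: "b \<le> 1 \<Longrightarrow> gain x g 1 b = 0"
  unfolding gain_def win_count_def by (cases b) auto

lemma symmetric_equilibriumI:
  assumes "strategy x f" and "strategy x g\<^sub>0" and "f 1 \<le> 1"
    and best: "\<And>v b. v \<le> x \<Longrightarrow> gain x f v b \<le> gain x f v (f v)"
    and strict: "\<And>v b. v \<le> x \<Longrightarrow> b \<noteq> f v \<Longrightarrow> \<not> (v = 1 \<and> b \<le> 1) \<Longrightarrow>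
                   gain x g\<^sub>0 v b < gain x g\<^sub>0 v (f v)"
  shows "symmetric_equilibrium x f"
proof -
  have "payoff x f' f \<le> payoff x f f" for f'
    unfolding payoff_le_iff total_gain_def using best by (intro sum_mono) auto
  moreover have "\<not> weakly_dominated x f"
  proof (rule not_weakly_dominated[OF \<open>strategy x g\<^sub>0\<close>])
    fix v b assume "v \<le> x"
    then show "gain x g\<^sub>0 v b \<le> gain x g\<^sub>0 v (f v)"
      using strict[of v b] gain_value_one[of b x g\<^sub>0] gain_value_one[OF \<open>f 1 \<le> 1\<close>, of x g\<^sub>0]
      by (cases "b = f v \<or> (v = 1 \<and> b \<le> 1)") auto
    fix g assume "gain x g\<^sub>0 v b = gain x g\<^sub>0 v (f v)"
    then have "b = f v \<or> (v = 1 \<and> b \<le> 1)" using strict[OF \<open>v \<le> x\<close>, of b] by auto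
    then show "gain x g v b = gain x g v (f v)"
      using gain_value_one[of b x g] gain_value_one[OF \<open>f 1 \<le> 1\<close>, of x g] by auto
  qed
  ultimately show ?thesis using \<open>strategy x f\<close> unfolding symmetric_equilibrium_def by blast
qed

text \<open>The floor rule is only a weak best response to itself (odd values are indifferent between
  the two halves), so non-dominance uses the opponent (w - 1) div 2 instead.\<close>

lemma floor_half_symmetric_equilibrium: "symmetric_equilibrium x (\<lambda>w. w div 2)"
proof (rule symmetric_equilibriumI)
  fix v b assume "v \<le> x"
  have vertex: "\<bar>4 * int (v div 2) - 2 * int v\<bar> \<le> 2" "\<bar>4 * int (v div 2) - 2 * int v + 1\<bar> \<le> 1"
    by (cases "even v"; auto elim!: evenE oddE)+
  show "gain x (\<lambda>w. w div 2) v b \<le> gain x (\<lambda>w. w div 2) v (v div 2)"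
    using win_count_halving[of _ 0] vertex(1) \<open>v \<le> x\<close> by (intro gain_le_vertex[where a = 0]) auto
  assume "b \<noteq> v div 2" "\<not> (v = 1 \<and> b \<le> 1)"
  then show "gain x (\<lambda>w. (w - 1) div 2) v b < gain x (\<lambda>w. (w - 1) div 2) v (v div 2)"
    using win_count_shifted_halving vertex(2) \<open>v \<le> x\<close> by (intro gain_less_vertex[where a = 1]) auto
qed (auto simp: strategy_def)

lemma ceiling_half_symmetric_equilibrium: "symmetric_equilibrium x (\<lambda>w. (w + 1) div 2)"
proof (rule symmetric_equilibriumI)
  fix v b assume "v \<le> x"
  have vertex: "\<bar>4 * int ((v + 1) div 2) - 2 * int v - 1\<bar> \<le> 1"
    by (cases "even v") (auto elim!: evenE oddE)
  show "gain x (\<lambda>w. (w + 1) div 2) v b \<le> gain x (\<lambda>w. (w + 1) div 2) v ((v + 1) div 2)"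
    using win_count_halving[of _ 1] vertex \<open>v \<le> x\<close> by (intro gain_le_vertex[where a = "-1"]) auto
  assume "b \<noteq> (v + 1) div 2" "\<not> (v = 1 \<and> b \<le> 1)"
  then show "gain x (\<lambda>w. (w + 1) div 2) v b < gain x (\<lambda>w. (w + 1) div 2) v ((v + 1) div 2)"
    using win_count_halving[of _ 1] vertex \<open>v \<le> x\<close> by (intro gain_less_vertex[where a = "-1"]) auto
qed (auto simp: strategy_def)

lemma payoff_cong:
  assumes "\<And>v. v \<le> x \<Longrightarrow> f v = f' v" and "\<And>v. v \<le> x \<Longrightarrow> g v = g' v"
  shows "payoff x f g = payoff x f' g'"
proof -
  have "win_prob x b g = win_prob x b g'" for b
    unfolding win_prob_def using assms(2) by (metis (mono_tags, lifting) Collect_cong)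
  then show ?thesis unfolding payoff_def using assms(1) by (intro sum.cong) auto
qed

lemma symmetric_equilibrium_cong:
  assumes "\<And>v. v \<le> x \<Longrightarrow> f v = f' v"
  shows "symmetric_equilibrium x f \<longleftrightarrow> symmetric_equilibrium x f'"
proof -
  have "strategy x f \<longleftrightarrow> strategy x f'" unfolding strategy_def using assms by auto
  moreover have "payoff x h f = payoff x h f'" "payoff x f h = payoff x f' h" for h
    using payoff_cong assms by blast+
  moreover have "payoff x f f = payoff x f' f'" using payoff_cong assms by blast
  ultimately show ?thesis unfolding symmetric_equilibrium_def weakly_dominated_def by simp
qed

theorem proposition2:
  fixes x :: nat and \<beta> :: "nat \<Rightarrow> nat"
  assumes "strategy x \<beta>"
  shows "symmetric_equilibrium x \<beta> \<longleftrightarrow>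
           (\<forall>v\<le>x. \<beta> v = v div 2) \<or> (\<forall>v\<le>x. \<beta> v = (v + 1) div 2)"
proof
  assume se: "symmetric_equilibrium x \<beta>"
  show "(\<forall>v\<le>x. \<beta> v = v div 2) \<or> (\<forall>v\<le>x. \<beta> v = (v + 1) div 2)"
  proof (cases "x = 0")
    case True
    then show ?thesis using symmetric_equilibrium_no_overbid[OF se, of 0] by auto
  next
    case False
    then have "\<beta> 1 \<le> 1" using symmetric_equilibrium_no_overbid[OF se, of 1] by simp
    then have "\<beta> 1 = 0 \<or> \<beta> 1 = 1" by auto
    then show ?thesis using symmetric_equilibrium_halving[OF se \<open>\<beta> 1 \<le> 1\<close>] by auto
  qed
next
  assume "(\<forall>v\<le>x. \<beta> v = v div 2) \<or> (\<forall>v\<le>x. \<beta> v = (v + 1) div 2)"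
  then show "symmetric_equilibrium x \<beta>"
  proof
    assume "\<forall>v\<le>x. \<beta> v = v div 2"
    then show ?thesis
      using symmetric_equilibrium_cong[of x \<beta> "\<lambda>v. v div 2"] floor_half_symmetric_equilibrium by simp
  next
    assume "\<forall>v\<le>x. \<beta> v = (v + 1) div 2"
    then show ?thesis
      using symmetric_equilibrium_cong[of x \<beta> "\<lambda>v. (v + 1) div 2"] ceiling_half_symmetric_equilibrium
      by simp
  qed
qed

end
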